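(* Let $E\subseteq E'\subseteq\binom{[n]}{2}$ and $K\in\mathbb{N}^{E'}$. If there exists $F\in W^K_{E,|E'|}$ with $\langle F,Q_{E'}\rangle\neq0$, then there exists $F'\in W^K_{E,|E|}$ with $\langle F',Q_E\rangle\neq0$.
   Context: $[n]=\{1,\dots,n\}$ and $\binom{[n]}{2}$ is the set of $2$-subsets of $[n]$. For a finite set $S$, $\mathbb{N}^S$ is the set of maps $S\to\mathbb{N}$, $\mathbb{N}^S_m=\{K\in\mathbb{N}^S:\sum_sK(s)=m\}$, $K!=\prod_sK(s)!$, and $K'\le K$ means pointwise inequality (maps on $E$ are compared with maps on $E'$ by extending by $0$). In $\mathbb{C}[x_1,\dots,x_n]$ define, for a set $E$ of $2$-subsets, $Q_E=\prod_{\{i,j\}\in E,\ i<j}(x_i-x_j)$ and for $K\in\mathbb{N}^E$, $H_E^K=\prod_{\{i,j\}\in E,\ i<j}(x_i+x_j)^{K(\{i,j\})}$. For $K\in\mathbb{N}^{E'}$ and $m\in\mathbb{N}$, $W^K_{E,m}$ is the complex linear span of $\{H_E^{K'}:K'\in\mathbb{N}^E_m,\ K'\le K\}$. On homogeneous polynomials of degree $m$ define $\langle f,g\rangle=\sum_{K\in\mathbb{N}^n_m}K!\,\mathrm{coe}(x^K,f)\overline{\mathrm{coe}(x^K,g)}$, where $x^K=\prod_ix_i^{K(i)}$ and $\mathrm{coe}(x^K,f)$ is the coefficient of $x^K$ in $f$. *)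

theory Defs
  imports Complex_Main "HOL-Library.Poly_Mapping"
begin

text \<open>Polynomials in C[x_1,...,x_n]: finitely supported maps from exponent
vectors (nat =>0 nat, variable index |-> exponent) to complex coefficients.\<close>
type_synonym cpoly = "(nat \<Rightarrow>\<^sub>0 nat) \<Rightarrow>\<^sub>0 complex"

definition Xv :: "nat \<Rightarrow> cpoly" where
  "Xv i = Poly_Mapping.single (Poly_Mapping.single i 1) 1"

definition cconst :: "complex \<Rightarrow> cpoly" where
  "cconst c = Poly_Mapping.single 0 c"

definition pairs :: "nat \<Rightarrow> nat set set" where
  "pairs n = {e. \<exists>i j. 1 \<le> i \<and> i < j \<and> j \<le> n \<and> e = {i, j}}"

definition Q :: "nat set set \<Rightarrow> cpoly" where
  "Q E = (\<Prod>e\<in>E. Xv (Min e) - Xv (Max e))"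

definition H :: "nat set set \<Rightarrow> (nat set \<Rightarrow> nat) \<Rightarrow> cpoly" where
  "H E K = (\<Prod>e\<in>E. (Xv (Min e) + Xv (Max e)) ^ K e)"

text \<open>Admissible exponent maps K' in N^E_m with K' <= K (maps on E are
extended by 0 outside E).\<close>
definition admissible :: "nat set set \<Rightarrow> (nat set \<Rightarrow> nat) \<Rightarrow> nat \<Rightarrow> (nat set \<Rightarrow> nat) set" where
  "admissible E K m = {K'. (\<forall>e. e \<notin> E \<longrightarrow> K' e = 0) \<and> (\<forall>e\<in>E. K' e \<le> K e) \<and> (\<Sum>e\<in>E. K' e) = m}"

definition W :: "(nat set \<Rightarrow> nat) \<Rightarrow> nat set set \<Rightarrow> nat \<Rightarrow> cpoly set" where
  "W K E m = {F. \<exists>S c. finite S \<and> S \<subseteq> admissible E K m \<and>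
                     F = (\<Sum>K'\<in>S. cconst (c K') * H E K')}"

definition mdeg :: "(nat \<Rightarrow>\<^sub>0 nat) \<Rightarrow> nat" where
  "mdeg K = (\<Sum>i\<in>Poly_Mapping.keys K. Poly_Mapping.lookup K i)"

definition mfact :: "(nat \<Rightarrow>\<^sub>0 nat) \<Rightarrow> nat" where
  "mfact K = (\<Prod>i\<in>Poly_Mapping.keys K. fact (Poly_Mapping.lookup K i))"

definition ip :: "nat \<Rightarrow> cpoly \<Rightarrow> cpoly \<Rightarrow> complex" where
  "ip m f g = (\<Sum>K\<in>{K\<in>Poly_Mapping.keys f. mdeg K = m}.
       of_nat (mfact K) * Poly_Mapping.lookup f K * cnj (Poly_Mapping.lookup g K))"

end

theory Submission
  imports Defs
begin

text \<open>
  For the inner product with weights \<open>K!\<close>, multiplication by \<open>x\<^sub>a\<close> is adjoint to the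
  partial derivative \<open>\<partial>\<^sub>a\<close>: \<open>\<langle>F, G x\<^sub>a\<rangle> = \<langle>\<partial>\<^sub>a F, G\<rangle>\<close> in degrees \<open>m + 1\<close> and \<open>m\<close>,
  because differentiating \<open>x\<^sup>k\<close> produces exactly the factor by which the weights of \<open>x\<^sup>k\<close>
  and \<open>x\<^sup>k / x\<^sub>a\<close> differ. Since \<open>\<partial>\<^sub>a (x\<^sub>i + x\<^sub>j)\<close> is a constant, \<open>\<partial>\<^sub>a\<close> maps \<open>W\<^sup>K\<close> in degree
  \<open>m + 1\<close> into \<open>W\<^sup>K\<close> in degree \<open>m\<close>. So the factors \<open>x\<^sub>i - x\<^sub>j\<close> of \<open>Q\<^sub>E\<^sub>'\<close> with
  \<open>{i, j} \<in> E' - E\<close> can be removed one at a time, replacing \<open>F\<close> by \<open>(\<partial>\<^sub>i - \<partial>\<^sub>j) F\<close>.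
\<close>

definition pdiff ::
    "nat \<Rightarrow> ((nat \<Rightarrow>\<^sub>0 nat) \<Rightarrow>\<^sub>0 'a::comm_semiring_1) \<Rightarrow> (nat \<Rightarrow>\<^sub>0 nat) \<Rightarrow>\<^sub>0 'a" where
  "pdiff a p = Abs_poly_mapping (\<lambda>k. of_nat (Poly_Mapping.lookup k a + 1) *
      Poly_Mapping.lookup p (k + Poly_Mapping.single a 1))"

lemma lookup_pdiff:
  "Poly_Mapping.lookup (pdiff a p) k =
     of_nat (Poly_Mapping.lookup k a + 1) * Poly_Mapping.lookup p (k + Poly_Mapping.single a 1)"
proof -
  let ?s = "Poly_Mapping.single a 1"
  have "finite ((\<lambda>k. k + ?s) -` Poly_Mapping.keys p)"
    by (rule finite_vimageI) (auto simp: inj_def)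
  then have "finite {k. of_nat (Poly_Mapping.lookup k a + 1) * Poly_Mapping.lookup p (k + ?s) \<noteq> 0}"
    by (rule rev_finite_subset) (auto simp: in_keys_iff)
  then show ?thesis
    by (simp add: pdiff_def)
qed

lemma diff_single_add_cancel:
  fixes m :: "'a \<Rightarrow>\<^sub>0 nat"
  assumes "Poly_Mapping.lookup m a \<noteq> 0"
  shows "m - Poly_Mapping.single a 1 + Poly_Mapping.single a 1 = m"
  using assms by (intro poly_mapping_eqI) (auto simp: lookup_add lookup_minus lookup_single when_def)

lemma pdiff_single:
  "pdiff a (Poly_Mapping.single m c) =
     Poly_Mapping.single (m - Poly_Mapping.single a 1) (of_nat (Poly_Mapping.lookup m a) * c)"
proof (rule poly_mapping_eqI)
  fix k
  let ?s = "Poly_Mapping.single a 1"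
  show "Poly_Mapping.lookup (pdiff a (Poly_Mapping.single m c)) k =
        Poly_Mapping.lookup (Poly_Mapping.single (m - ?s) (of_nat (Poly_Mapping.lookup m a) * c)) k"
  proof (cases "m = k + ?s")
    case True
    then show ?thesis
      by (simp add: lookup_pdiff lookup_add)
  next
    case False
    then have "Poly_Mapping.lookup m a = 0 \<or> m - ?s \<noteq> k"
      using diff_single_add_cancel[of m a] by auto
    with False show ?thesis
      by (auto simp: lookup_pdiff lookup_single when_def)
  qed
qed

lemma pdiff_add: "pdiff a (p + q) = pdiff a p + pdiff a q"
  by (rule poly_mapping_eqI) (simp add: lookup_pdiff lookup_add algebra_simps)

lemma pdiff_zero: "pdiff a 0 = 0"
  by (rule poly_mapping_eqI) (simp add: lookup_pdiff)

lemma pdiff_sum: "pdiff a (sum f A) = (\<Sum>x\<in>A. pdiff a (f x))"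
  by (rule poly_mapping_eqI) (simp add: lookup_pdiff lookup_sum sum_distrib_left)

lemma poly_mapping_sum_single:
  "p = (\<Sum>k\<in>Poly_Mapping.keys p. Poly_Mapping.single k (Poly_Mapping.lookup p k))"
proof (rule poly_mapping_eqI)
  fix k
  have "(\<Sum>x\<in>Poly_Mapping.keys p.
        Poly_Mapping.lookup (Poly_Mapping.single x (Poly_Mapping.lookup p x)) k) =
      (\<Sum>x\<in>Poly_Mapping.keys p. if x = k then Poly_Mapping.lookup p k else 0)"
    by (rule sum.cong) (auto simp: lookup_single when_def)
  then show "Poly_Mapping.lookup p k =
      Poly_Mapping.lookup (\<Sum>k\<in>Poly_Mapping.keys p. Poly_Mapping.single k (Poly_Mapping.lookup p k)) k"
    by (simp add: lookup_sum in_keys_iff)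
qed

lemma single_diff_single_add:
  "Poly_Mapping.single (m - Poly_Mapping.single a 1 + m') (of_nat (Poly_Mapping.lookup m a) * x) =
   Poly_Mapping.single (m + m' - Poly_Mapping.single a 1) (of_nat (Poly_Mapping.lookup m a) * x)"
proof (cases "Poly_Mapping.lookup m a = 0")
  case False
  then have "m - Poly_Mapping.single a 1 + m' = m + m' - Poly_Mapping.single a 1"
    by (intro poly_mapping_eqI) (auto simp: lookup_add lookup_minus lookup_single when_def)
  then show ?thesis by simp
qed simp

lemma pdiff_mult_single:
  "pdiff a (Poly_Mapping.single m c * Poly_Mapping.single m' c') =
     pdiff a (Poly_Mapping.single m c) * Poly_Mapping.single m' c' +
     Poly_Mapping.single m c * pdiff a (Poly_Mapping.single m' c')"
  using single_diff_single_add[of m a m' "c * c'"] single_diff_single_add[of m' a m "c * c'"]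
  by (simp add: mult_single pdiff_single lookup_add single_add[symmetric] algebra_simps)

lemma pdiff_mult: "pdiff a (p * q) = pdiff a p * q + p * pdiff a q"
proof -
  let ?P = "Poly_Mapping.keys p" and ?Q = "Poly_Mapping.keys q"
  let ?m = "\<lambda>k. Poly_Mapping.single k (Poly_Mapping.lookup p k)"
  let ?n = "\<lambda>l. Poly_Mapping.single l (Poly_Mapping.lookup q l)"
  have "pdiff a (p * q) = pdiff a ((\<Sum>k\<in>?P. ?m k) * (\<Sum>l\<in>?Q. ?n l))"
    by (simp flip: poly_mapping_sum_single)
  also have "\<dots> = (\<Sum>k\<in>?P. \<Sum>l\<in>?Q. pdiff a (?m k) * ?n l + ?m k * pdiff a (?n l))"
    by (simp add: sum_product pdiff_sum pdiff_mult_single)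
  also have "\<dots> = (\<Sum>k\<in>?P. pdiff a (?m k)) * (\<Sum>l\<in>?Q. ?n l) +
      (\<Sum>k\<in>?P. ?m k) * (\<Sum>l\<in>?Q. pdiff a (?n l))"
    by (simp add: sum.distrib sum_product)
  also have "\<dots> = pdiff a p * q + p * pdiff a q"
    by (simp flip: poly_mapping_sum_single pdiff_sum)
  finally show ?thesis .
qed

lemma pdiff_one: "pdiff a 1 = 0"
  by (simp flip: single_one add: pdiff_single)

lemma pdiff_power: "pdiff a (p ^ k) = of_nat k * p ^ (k - 1) * pdiff a p"
proof (induction k)
  case (Suc k)
  then show ?case
    by (cases k) (simp_all add: pdiff_mult pdiff_one algebra_simps)
qed (simp add: pdiff_one)

lemma pdiff_prod:
  "finite A \<Longrightarrow> pdiff a (\<Prod>e\<in>A. f e) = (\<Sum>e\<in>A. pdiff a (f e) * (\<Prod>e'\<in>A - {e}. f e'))"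
proof (induction A rule: finite_induct)
  case (insert x A)
  have "(\<Sum>e\<in>A. pdiff a (f e) * (\<Prod>e'\<in>insert x A - {e}. f e'))
      = (\<Sum>e\<in>A. f x * (pdiff a (f e) * (\<Prod>e'\<in>A - {e}. f e')))"
  proof (rule sum.cong)
    fix e assume "e \<in> A"
    then have "insert x A - {e} = insert x (A - {e})" "x \<notin> A - {e}"
      using insert.hyps by auto
    then show "pdiff a (f e) * (\<Prod>e'\<in>insert x A - {e}. f e') =
        f x * (pdiff a (f e) * (\<Prod>e'\<in>A - {e}. f e'))"
      using insert.hyps by (simp add: ac_simps)
  qed simp
  with insert show ?case
    by (simp add: pdiff_mult sum_distrib_left insert_Diff_if)
qed (simp add: pdiff_one)

lemma cconst_add: "cconst (x + y) = cconst x + cconst y"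
  by (simp add: cconst_def single_add)

lemma cconst_mult: "cconst (x * y) = cconst x * cconst y"
  by (simp add: cconst_def mult_single)

interpretation cpoly: module "\<lambda>c (p :: cpoly). cconst c * p"
  by standard (simp_all add: cconst_add cconst_mult algebra_simps, simp add: cconst_def)

lemma W_eq_span: "W K E m = cpoly.span (H E ` admissible E K m)"
proof
  show "W K E m \<subseteq> cpoly.span (H E ` admissible E K m)"
  proof
    fix F assume "F \<in> W K E m"
    then obtain S c where S: "S \<subseteq> admissible E K m" "F = (\<Sum>K'\<in>S. cconst (c K') * H E K')"
      unfolding W_def by blast
    have "cconst (c K') * H E K' \<in> cpoly.span (H E ` admissible E K m)" if "K' \<in> S" for K'
      using that S(1) by (intro cpoly.span_scale cpoly.span_base) auto
    then show "F \<in> cpoly.span (H E ` admissible E K m)"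
      unfolding S(2) by (rule cpoly.span_sum)
  qed
next
  show "cpoly.span (H E ` admissible E K m) \<subseteq> W K E m"
  proof
    fix F assume "F \<in> cpoly.span (H E ` admissible E K m)"
    then obtain T r where T: "finite T" "T \<subseteq> H E ` admissible E K m"
      and F: "F = (\<Sum>p\<in>T. cconst (r p) * p)"
      by (auto simp: cpoly.span_explicit)
    \<comment> \<open>\<open>H E\<close> need not be injective, so choose one exponent map per generator\<close>
    define S where "S = inv_into (admissible E K m) (H E) ` T"
    have "F = (\<Sum>K'\<in>S. cconst (r (H E K')) * H E K')"
      unfolding F S_def using T(2)
      by (simp add: sum.reindex inj_on_inv_into f_inv_into_f[of _ "H E"] subset_iff)
    moreover have "finite S"
      using T(1) by (simp add: S_def)
    moreover have "S \<subseteq> admissible E K m"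
      unfolding S_def using T(2) by (blast intro: inv_into_into)
    ultimately show "F \<in> W K E m"
      unfolding W_def by (intro CollectI exI[of _ S] exI[of _ "\<lambda>K'. r (H E K')"]) simp
  qed
qed

lemma admissible_decrement:
  assumes "finite E" "K' \<in> admissible E K (Suc m)" "e \<in> E" "K' e \<noteq> 0"
  shows "K'(e := K' e - 1) \<in> admissible E K m"
proof -
  have "(\<Sum>x\<in>E. K' x) = Suc m"
    using assms(2) by (simp add: admissible_def)
  with assms(1,3,4) have "(\<Sum>x\<in>E. (K'(e := K' e - 1)) x) = m"
    by (simp add: sum.remove)
  with assms(2,3) show ?thesis
    by (auto simp: admissible_def intro: le_trans[of _ "K' e"])
qed

lemma pdiff_cconst_mult: "pdiff a (cconst c * p) = cconst c * pdiff a p"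
  by (simp add: pdiff_mult cconst_def pdiff_single)

lemma pdiff_Xv: "pdiff a (Xv i) = cconst (if i = a then 1 else 0)"
  by (simp add: Xv_def cconst_def pdiff_single lookup_single)

lemma pdiff_H:
  assumes "finite E"
  shows "pdiff a (H E K') =
    (\<Sum>e\<in>E. of_nat (K' e) * pdiff a (Xv (Min e) + Xv (Max e)) * H E (K'(e := K' e - 1)))"
proof -
  have "H E (K'(e := K' e - 1)) =
      (Xv (Min e) + Xv (Max e)) ^ (K' e - 1) * (\<Prod>e'\<in>E - {e}. (Xv (Min e') + Xv (Max e')) ^ K' e')"
    if "e \<in> E" for e
    using assms that by (simp add: H_def prod.remove)
  then show ?thesis
    using assms by (simp add: H_def pdiff_prod pdiff_power ac_simps)
qed

lemma pdiff_H_in_W: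
  assumes "finite E" "K' \<in> admissible E K (Suc m)"
  shows "pdiff a (H E K') \<in> W K E m"
  unfolding pdiff_H[OF assms(1)] W_eq_span
proof (rule cpoly.span_sum)
  fix e assume e: "e \<in> E"
  let ?c = "of_nat (K' e) * ((if Min e = a then 1 else 0) + (if Max e = a then 1 else 0))"
  have coeff: "of_nat (K' e) * pdiff a (Xv (Min e) + Xv (Max e)) = cconst ?c"
    by (simp add: pdiff_add pdiff_Xv cconst_add cconst_mult, simp add: cconst_def)
  show "of_nat (K' e) * pdiff a (Xv (Min e) + Xv (Max e)) * H E (K'(e := K' e - 1))
        \<in> cpoly.span (H E ` admissible E K m)"
  proof (cases "K' e = 0")
    case False
    then have "H E (K'(e := K' e - 1)) \<in> H E ` admissible E K m"
      using admissible_decrement[OF assms e] by blast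
    then show ?thesis
      unfolding coeff by (intro cpoly.span_scale cpoly.span_base)
  qed (simp add: cpoly.span_zero)
qed

lemma pdiff_W:
  assumes "finite E" "F \<in> W K E (Suc m)"
  shows "pdiff a F \<in> W K E m"
  using assms(2) unfolding W_eq_span
proof (induction rule: cpoly.span_induct_alt)
  case base
  then show ?case
    by (simp add: pdiff_zero cpoly.span_zero)
next
  case (step c p F)
  then obtain K' where "K' \<in> admissible E K (Suc m)" "p = H E K'"
    by blast
  then have "pdiff a p \<in> cpoly.span (H E ` admissible E K m)"
    using pdiff_H_in_W[OF assms(1)] by (simp add: W_eq_span)
  then show ?case
    using step.IH by (simp add: pdiff_add pdiff_cconst_mult cpoly.span_add cpoly.span_scale)
qed

lemma ip_eq_sum_superset:
  assumes "finite T" "Poly_Mapping.keys f \<subseteq> T"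
  shows "ip m f g = (\<Sum>k\<in>T. if mdeg k = m
      then of_nat (mfact k) * Poly_Mapping.lookup f k * cnj (Poly_Mapping.lookup g k) else 0)"
proof -
  have "ip m f g = (\<Sum>k\<in>{k\<in>T. mdeg k = m}.
      of_nat (mfact k) * Poly_Mapping.lookup f k * cnj (Poly_Mapping.lookup g k))"
    unfolding ip_def by (rule sum.mono_neutral_left) (use assms in \<open>auto simp: in_keys_iff\<close>)
  with assms(1) show ?thesis
    by (simp add: sum.inter_filter)
qed

lemma ip_diff_left: "ip m (f - h) g = ip m f g - ip m h g"
proof -
  let ?T = "Poly_Mapping.keys f \<union> Poly_Mapping.keys h"
  let ?t = "\<lambda>p k. if mdeg k = m
      then of_nat (mfact k) * Poly_Mapping.lookup p k * cnj (Poly_Mapping.lookup g k) else 0"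
  have "ip m (f - h) g = (\<Sum>k\<in>?T. ?t (f - h) k)"
    using keys_diff[of f h] by (simp add: ip_eq_sum_superset)
  also have "\<dots> = (\<Sum>k\<in>?T. ?t f k - ?t h k)"
    by (rule sum.cong) (auto simp: lookup_minus algebra_simps)
  also have "\<dots> = ip m f g - ip m h g"
    by (simp add: sum_subtractf ip_eq_sum_superset[of ?T])
  finally show ?thesis .
qed

lemma ip_diff_right: "ip m f (g - h) = ip m f g - ip m f h"
  by (simp add: ip_def lookup_minus sum_subtractf[symmetric] algebra_simps)

lemma mdeg_eq_sum_superset:
  "finite S \<Longrightarrow> Poly_Mapping.keys k \<subseteq> S \<Longrightarrow> mdeg k = (\<Sum>i\<in>S. Poly_Mapping.lookup k i)"
  unfolding mdeg_def by (rule sum.mono_neutral_left) (auto simp: in_keys_iff)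

lemma mfact_eq_prod_superset:
  "finite S \<Longrightarrow> Poly_Mapping.keys k \<subseteq> S \<Longrightarrow> mfact k = (\<Prod>i\<in>S. fact (Poly_Mapping.lookup k i))"
  unfolding mfact_def by (rule prod.mono_neutral_left) (auto simp: in_keys_iff)

lemma mdeg_add: "mdeg (k + l) = mdeg k + mdeg l"
proof -
  let ?S = "Poly_Mapping.keys k \<union> Poly_Mapping.keys l"
  have "Poly_Mapping.keys (k + l) \<subseteq> ?S"
    by (rule keys_add)
  then show ?thesis
    by (simp add: mdeg_eq_sum_superset[of ?S] lookup_add sum.distrib)
qed

lemma mdeg_single: "mdeg (Poly_Mapping.single a c) = c"
  by (simp add: mdeg_def)

lemma mdeg_add_single: "mdeg (k + Poly_Mapping.single a 1) = Suc (mdeg k)"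
  by (simp add: mdeg_add mdeg_single)

lemma mfact_add_single:
  "mfact (k + Poly_Mapping.single a 1) = mfact k * (Poly_Mapping.lookup k a + 1)"
proof -
  let ?S = "insert a (Poly_Mapping.keys k)"
  have "Poly_Mapping.keys (k + Poly_Mapping.single a 1) \<subseteq> ?S"
    using keys_add[of k "Poly_Mapping.single a 1"] by auto
  then have "mfact (k + Poly_Mapping.single a 1) =
      (\<Prod>i\<in>?S. fact (Poly_Mapping.lookup k i + (if i = a then 1 else 0)))"
    by (subst mfact_eq_prod_superset[of ?S])
      (auto simp: lookup_add lookup_single when_def intro!: prod.cong)
  also have "\<dots> = fact (Poly_Mapping.lookup k a + 1) *
      (\<Prod>i\<in>?S - {a}. fact (Poly_Mapping.lookup k i))"
    by (subst prod.remove[of _ a]) (auto intro!: prod.cong)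
  also have "\<dots> = (Poly_Mapping.lookup k a + 1) * (\<Prod>i\<in>?S. fact (Poly_Mapping.lookup k i))"
    by (simp add: prod.insert_remove algebra_simps)
  also have "\<dots> = mfact k * (Poly_Mapping.lookup k a + 1)"
    by (subst mfact_eq_prod_superset[of ?S k]) auto
  finally show ?thesis .
qed

lemma lookup_mult_Xv:
  "Poly_Mapping.lookup (G * Xv a) k =
     (\<Sum>j\<in>Poly_Mapping.keys G. if j + Poly_Mapping.single a 1 = k then Poly_Mapping.lookup G j else 0)"
proof -
  have "G * Xv a = (\<Sum>j\<in>Poly_Mapping.keys G.
      Poly_Mapping.single (j + Poly_Mapping.single a 1) (Poly_Mapping.lookup G j))"
    by (subst poly_mapping_sum_single[of G]) (simp add: Xv_def sum_distrib_right mult_single)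
  then show ?thesis
    by (simp add: lookup_sum lookup_single when_def)
qed

lemma lookup_mult_Xv_add_single:
  "Poly_Mapping.lookup (G * Xv a) (k + Poly_Mapping.single a 1) = Poly_Mapping.lookup G k"
  by (simp add: lookup_mult_Xv in_keys_iff)

lemma lookup_mult_Xv_outside_range:
  "k \<notin> range (\<lambda>j. j + Poly_Mapping.single a 1) \<Longrightarrow> Poly_Mapping.lookup (G * Xv a) k = 0"
  unfolding lookup_mult_Xv by (rule sum.neutral) auto

lemma ip_mult_Xv: "ip (Suc m) F (G * Xv a) = ip m (pdiff a F) G"
proof -
  let ?s = "Poly_Mapping.single a 1"
  let ?t = "\<lambda>d k. if mdeg k = d
      then of_nat (mfact k) * Poly_Mapping.lookup F k * cnj (Poly_Mapping.lookup (G * Xv a) k) else 0"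
  define J where "J = (\<lambda>j. j + ?s) -` Poly_Mapping.keys F"
  have inj: "inj (\<lambda>j :: nat \<Rightarrow>\<^sub>0 nat. j + ?s)"
    by (simp add: inj_def)
  have "finite J"
    unfolding J_def using inj by (simp add: finite_vimageI)
  moreover have "Poly_Mapping.keys (pdiff a F) \<subseteq> J"
    by (auto simp: J_def in_keys_iff lookup_pdiff)
  ultimately have "ip m (pdiff a F) G = (\<Sum>j\<in>J. if mdeg j = m then of_nat (mfact j) *
      Poly_Mapping.lookup (pdiff a F) j * cnj (Poly_Mapping.lookup G j) else 0)"
    by (rule ip_eq_sum_superset)
  also have "\<dots> = (\<Sum>j\<in>J. ?t (Suc m) (j + ?s))"
    unfolding mdeg_add_single mfact_add_single lookup_pdiff lookup_mult_Xv_add_single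
    by (simp only: nat.inject of_nat_mult mult_ac)
  also have "\<dots> = (\<Sum>k\<in>(\<lambda>j. j + ?s) ` J. ?t (Suc m) k)"
    using inj by (simp only: sum.reindex[OF inj_on_subset[OF inj subset_UNIV]] comp_def)
  also have "\<dots> = (\<Sum>k\<in>Poly_Mapping.keys F. ?t (Suc m) k)"
  proof (rule sum.mono_neutral_left)
    show "\<forall>k\<in>Poly_Mapping.keys F - (\<lambda>j. j + ?s) ` J. ?t (Suc m) k = 0"
    proof
      fix k assume "k \<in> Poly_Mapping.keys F - (\<lambda>j. j + ?s) ` J"
      then have "k \<notin> range (\<lambda>j. j + ?s)"
        by (auto simp: J_def)
      then show "?t (Suc m) k = 0"
        by (simp add: lookup_mult_Xv_outside_range)
    qed
  qed (auto simp: J_def)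
  also have "\<dots> = ip (Suc m) F (G * Xv a)"
    by (rule ip_eq_sum_superset[symmetric]) simp_all
  finally show ?thesis ..
qed

lemma W_ip_mult_diff_Xv:
  assumes "finite E" "F \<in> W K E (Suc m)" "ip (Suc m) F (G * (Xv a - Xv b)) \<noteq> 0"
  shows "\<exists>F'\<in>W K E m. ip m F' G \<noteq> 0"
proof
  show "pdiff a F - pdiff b F \<in> W K E m"
    using pdiff_W[OF assms(1,2)] by (simp add: W_eq_span cpoly.span_diff)
  have "ip m (pdiff a F - pdiff b F) G = ip (Suc m) F (G * (Xv a - Xv b))"
    by (simp add: ip_diff_left ip_diff_right ip_mult_Xv right_diff_distrib)
  with assms(3) show "ip m (pdiff a F - pdiff b F) G \<noteq> 0"
    by simp
qed

lemma W_ip_mult_Q: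
  assumes "finite E" "finite D"
  shows "F \<in> W K E (m + card D) \<Longrightarrow> ip (m + card D) F (G * Q D) \<noteq> 0 \<Longrightarrow>
    \<exists>F'\<in>W K E m. ip m F' G \<noteq> 0"
  using assms(2)
proof (induction D arbitrary: F rule: finite_induct)
  case empty
  then show ?case
    by (auto simp: Q_def)
next
  case (insert d D)
  have Q_insert: "G * Q (insert d D) = (G * Q D) * (Xv (Min d) - Xv (Max d))"
    using insert.hyps by (simp add: Q_def ac_simps)
  have card_insert: "m + card (insert d D) = Suc (m + card D)"
    using insert.hyps by simp
  have "F \<in> W K E (Suc (m + card D))"
    and "ip (Suc (m + card D)) F ((G * Q D) * (Xv (Min d) - Xv (Max d))) \<noteq> 0"
    using insert.prems unfolding Q_insert card_insert .
  then have "\<exists>F'\<in>W K E (m + card D). ip (m + card D) F' (G * Q D) \<noteq> 0"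
    by (rule W_ip_mult_diff_Xv[OF assms(1)])
  then obtain F' where "F' \<in> W K E (m + card D)" "ip (m + card D) F' (G * Q D) \<noteq> 0"
    by blast
  then show ?case
    by (rule insert.IH)
qed

lemma finite_pairs: "finite (pairs n)"
proof (rule finite_subset)
  show "pairs n \<subseteq> Pow {1..n}"
    unfolding pairs_def by auto
qed simp

theorem lemma6p1:
  fixes n :: nat and E E' :: "nat set set" and K :: "nat set \<Rightarrow> nat"
  assumes "E \<subseteq> E'" and "E' \<subseteq> pairs n"
    and "\<exists>F\<in>W K E (card E'). ip (card E') F (Q E') \<noteq> 0"
  shows "\<exists>F'\<in>W K E (card E). ip (card E) F' (Q E) \<noteq> 0"
proof -
  have "finite E'"
    using assms(2) finite_pairs by (rule finite_subset)
  then have "finite E"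
    using assms(1) finite_subset by blast
  have "card E' = card E + card (E' - E)"
    using \<open>finite E\<close> \<open>finite E'\<close> assms(1) by (simp add: card_Diff_subset card_mono)
  moreover have "Q E' = Q E * Q (E' - E)"
    unfolding Q_def using \<open>finite E'\<close> assms(1) by (simp add: prod.subset_diff mult.commute)
  moreover obtain F where "F \<in> W K E (card E')" "ip (card E') F (Q E') \<noteq> 0"
    using assms(3) by blast
  ultimately show ?thesis
    using W_ip_mult_Q[OF \<open>finite E\<close>, of "E' - E" F K "card E" "Q E"] \<open>finite E'\<close>
    by simp
qed

end
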